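(* Let $k \ge 2$ and $n$ be positive integers, and let $a_1<\dots<a_r<n-1$ be positive integers. Then there is a connected graph $G$ with \[\mathrm{SW}_k(G)=\mathrm{SW}_k(S_n)-\binom{a_1}{k-1}-\dots-\binom{a_r}{k-1}.\]
   Context: $S_n$ denotes the star graph on $n$ vertices (one center adjacent to the other $n-1$ vertices, with $n-1$ edges). For a connected graph $G$ and a subset $S \subset V(G)$, the Steiner distance $d(S)$ is the smallest number of edges in a connected subgraph of $G$ whose vertex set contains $S$. For an integer $k\ge 2$, the Steiner--Wiener $k$ index of $G$ is $\mathrm{SW}_k(G)=\sum_{S \subset V(G),\ |S|=k} d(S)$. *)

theory Defs
  imports Main
begin

definition simple_graph :: "'a set \<Rightarrow> 'a set set \<Rightarrow> bool" where
  "simple_graph V E \<longleftrightarrow> finite V \<and>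
     (\<forall>e\<in>E. \<exists>u v. u \<noteq> v \<and> u \<in> V \<and> v \<in> V \<and> e = {u, v})"

definition adj_rel :: "'a set set \<Rightarrow> ('a \<times> 'a) set" where
  "adj_rel E = {(u, v). {u, v} \<in> E \<and> u \<noteq> v}"

definition connected_graph :: "'a set \<Rightarrow> 'a set set \<Rightarrow> bool" where
  "connected_graph V E \<longleftrightarrow> simple_graph V E \<and> V \<noteq> {} \<and>
     (\<forall>u\<in>V. \<forall>v\<in>V. (u, v) \<in> (adj_rel E)\<^sup>*)"

definition steiner_dist :: "'a set \<Rightarrow> 'a set set \<Rightarrow> 'a set \<Rightarrow> nat" where
  "steiner_dist V E S = (LEAST m. \<exists>W F. W \<subseteq> V \<and> F \<subseteq> E \<and> connected_graph W F
       \<and> S \<subseteq> W \<and> card F = m)"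

definition SW :: "nat \<Rightarrow> 'a set \<Rightarrow> 'a set set \<Rightarrow> nat" where
  "SW k V E = (\<Sum>S\<in>{S. S \<subseteq> V \<and> card S = k}. steiner_dist V E S)"

definition star_V :: "nat \<Rightarrow> nat set" where
  "star_V n = {0..<n}"

definition star_E :: "nat \<Rightarrow> nat set set" where
  "star_E n = {{0, i} | i. i \<in> {1..<n}}"

end

theory Submission
  imports Defs
begin

text \<open>Add to the star \<open>S\<^sub>n\<close> on \<open>{0..<n}\<close> (centre \<open>0\<close>) all edges from each hub
  \<open>a + 1\<close>, \<open>a \<in> A\<close>, to the vertices \<open>1, \<dots>, a\<close>. A \<open>k\<close>-set always needs \<open>k - 1\<close> edges,
  and gets away with exactly that many iff one of its vertices is adjacent to all the others;
  otherwise it needs \<open>k\<close> edges, via the centre. Hence in both graphs a \<open>k\<close>-set costs \<open>k - 1\<close>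
  if it contains \<open>0\<close>, and \<open>k\<close> otherwise, except that in the new graph the \<open>C(a, k - 1)\<close>
  sets avoiding \<open>0\<close> with maximum \<open>a + 1\<close> also cost only \<open>k - 1\<close>.\<close>

lemma simple_graph_finite_edges:
  assumes "simple_graph W F"
  shows "finite F"
proof -
  have "F \<subseteq> Pow W" using assms unfolding simple_graph_def by auto
  moreover have "finite W" using assms unfolding simple_graph_def by simp
  ultimately show ?thesis by (meson finite_Pow_iff finite_subset)
qed

lemma connected_graph_card_le:
  assumes "connected_graph W F"
  shows "card W \<le> card F + 1"
proof -
  have fW: "finite W" and fF: "finite F" and conn: "\<forall>u\<in>W. \<forall>v\<in>W. (u, v) \<in> (adj_rel F)\<^sup>*"
    using assms simple_graph_finite_edges unfolding connected_graph_def simple_graph_def by auto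
  obtain r where r: "r \<in> W" using assms unfolding connected_graph_def by auto
  define d where "d v = (LEAST m. (v, r) \<in> adj_rel F ^^ m)" for v
  \<comment> \<open>every vertex other than \<open>r\<close> has a neighbour closer to \<open>r\<close>; the edges to these
    parents are pairwise distinct\<close>
  have "\<exists>w. {v, w} \<in> F \<and> d w < d v" if v: "v \<in> W - {r}" for v
  proof -
    obtain m where "(v, r) \<in> adj_rel F ^^ m" using conn v r rtrancl_power by blast
    then have walk: "(v, r) \<in> adj_rel F ^^ d v" unfolding d_def by (rule LeastI)
    with v obtain d' where "d v = Suc d'" by (cases "d v") auto
    with walk obtain w where "(v, w) \<in> adj_rel F" "(w, r) \<in> adj_rel F ^^ d'"
      by (metis relpow_Suc_D2)
    moreover from this(2) have "d w \<le> d'" unfolding d_def by (rule Least_le)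
    ultimately show ?thesis using \<open>d v = Suc d'\<close> unfolding adj_rel_def by auto
  qed
  then obtain parent where parent: "\<And>v. v \<in> W - {r} \<Longrightarrow> {v, parent v} \<in> F \<and> d (parent v) < d v"
    by metis
  have "inj_on (\<lambda>v. {v, parent v}) (W - {r})"
  proof (rule inj_onI)
    fix v v' assume vv': "v \<in> W - {r}" "v' \<in> W - {r}" "{v, parent v} = {v', parent v'}"
    show "v = v'"
    proof (rule ccontr)
      assume "v \<noteq> v'"
      with vv'(3) have "v = parent v'" "v' = parent v" by (auto simp: doubleton_eq_iff)
      with parent[OF vv'(1)] parent[OF vv'(2)] show False by (metis less_asym)
    qed
  qed
  moreover have "(\<lambda>v. {v, parent v}) ` (W - {r}) \<subseteq> F" using parent by auto
  ultimately have "card (W - {r}) \<le> card F" using card_inj_on_le fF by blast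
  then show ?thesis using r fW by (simp add: card_Diff_singleton)
qed

lemma connected_graph_mono_edges:
  assumes "connected_graph W F" "F \<subseteq> E" "simple_graph W E"
  shows "connected_graph W E"
proof -
  have "adj_rel F \<subseteq> adj_rel E" using assms(2) unfolding adj_rel_def by auto
  then have "(adj_rel F)\<^sup>* \<subseteq> (adj_rel E)\<^sup>*" by (rule rtrancl_mono)
  with assms show ?thesis unfolding connected_graph_def by blast
qed

definition star_edges :: "'a \<Rightarrow> 'a set \<Rightarrow> 'a set set" where
  "star_edges c W = (\<lambda>s. {c, s}) ` (W - {c})"

lemma card_star_edges:
  assumes "finite W" "c \<in> W"
  shows "card (star_edges c W) = card W - 1"
proof -
  have "inj_on (\<lambda>s. {c, s}) (W - {c})" by (rule inj_onI) (auto simp: doubleton_eq_iff)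
  with assms show ?thesis unfolding star_edges_def by (simp add: card_image)
qed

lemma connected_graph_star_edges:
  assumes "finite W" "c \<in> W"
  shows "connected_graph W (star_edges c W)"
proof -
  let ?R = "adj_rel (star_edges c W)"
  have "(u, c) \<in> ?R\<^sup>* \<and> (c, u) \<in> ?R\<^sup>*" if "u \<in> W" for u
  proof (cases "u = c")
    case False
    with that have "(u, c) \<in> ?R" "(c, u) \<in> ?R"
      unfolding adj_rel_def star_edges_def by (auto simp: insert_commute)
    then show ?thesis by auto
  qed simp
  then have "\<forall>u\<in>W. \<forall>v\<in>W. (u, v) \<in> ?R\<^sup>*" by (meson rtrancl_trans)
  moreover have "simple_graph W (star_edges c W)"
    using assms unfolding simple_graph_def star_edges_def by blast
  ultimately show ?thesis using assms unfolding connected_graph_def by blast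
qed

lemma steiner_dist_le:
  assumes "W \<subseteq> V" "F \<subseteq> E" "connected_graph W F" "S \<subseteq> W"
  shows "steiner_dist V E S \<le> card F"
  unfolding steiner_dist_def using assms by (intro Least_le) blast

lemma steiner_dist_attained:
  assumes "connected_graph V E" "S \<subseteq> V"
  obtains W F where "W \<subseteq> V" "F \<subseteq> E" "connected_graph W F" "S \<subseteq> W"
    "card F = steiner_dist V E S"
proof -
  have "\<exists>W F. W \<subseteq> V \<and> F \<subseteq> E \<and> connected_graph W F \<and> S \<subseteq> W \<and> card F = steiner_dist V E S"
    unfolding steiner_dist_def by (rule LeastI[of _ "card E"]) (use assms in blast)
  with that show ?thesis by blast
qed

lemma steiner_dist_ge_card_minus_1:
  assumes "connected_graph V E" "S \<subseteq> V"
  shows "card S - 1 \<le> steiner_dist V E S"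
proof -
  obtain W F where "W \<subseteq> V" "connected_graph W F" "S \<subseteq> W" "card F = steiner_dist V E S"
    using steiner_dist_attained[OF assms] .
  moreover from this have "card S \<le> card W"
    by (meson card_mono connected_graph_def simple_graph_def)
  ultimately show ?thesis using connected_graph_card_le by fastforce
qed

lemma steiner_dist_le_common_neighbour:
  assumes "finite V" "c \<in> V" "S \<subseteq> V" "\<forall>s\<in>S - {c}. {c, s} \<in> E"
  shows "steiner_dist V E S \<le> card (insert c S) - 1"
proof -
  have "finite (insert c S)" using assms finite_subset by blast
  moreover have "star_edges c (insert c S) \<subseteq> E" using assms(4) unfolding star_edges_def by auto
  ultimately show ?thesis
    using steiner_dist_le[of "insert c S"] assms(2,3)
    by (metis card_star_edges connected_graph_star_edges insert_subset insertI1 subset_insertI)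
qed

lemma steiner_dist_dominated:
  assumes "connected_graph V E" "c \<in> S" "S \<subseteq> V" "\<forall>s\<in>S - {c}. {c, s} \<in> E"
  shows "steiner_dist V E S = card S - 1"
  using steiner_dist_le_common_neighbour[of V c S E] steiner_dist_ge_card_minus_1[of V E S] assms
  by (auto simp: connected_graph_def simple_graph_def insert_absorb)

lemma steiner_dist_ge_isolated:
  assumes "connected_graph V E" "S \<subseteq> V" "2 \<le> card S" "m \<in> S" "\<forall>s\<in>S. {m, s} \<notin> E"
  shows "card S \<le> steiner_dist V E S"
proof (rule ccontr)
  assume short: "\<not> card S \<le> steiner_dist V E S"
  obtain W F where WF: "F \<subseteq> E" "connected_graph W F" "S \<subseteq> W" "card F = steiner_dist V E S"
    using steiner_dist_attained[OF assms(1,2)] .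
  have "finite W" using WF(2) unfolding connected_graph_def simple_graph_def by simp
  moreover have "card W \<le> card S" using connected_graph_card_le[OF WF(2)] WF(4) short by linarith
  ultimately have "W = S" using WF(3) card_seteq by blast
  have "S - {m} \<noteq> {}" using assms(3,4) card_Diff_singleton[of m S] by fastforce
  then obtain u where "u \<in> S" "u \<noteq> m" by blast
  then have "(m, u) \<in> (adj_rel F)\<^sup>*" using WF(2) \<open>W = S\<close> assms(4) unfolding connected_graph_def by blast
  with \<open>u \<noteq> m\<close> obtain y where "(m, y) \<in> adj_rel F" by (metis converse_rtranclE)
  then have "{m, y} \<in> F" "y \<in> W"
    using WF(2) unfolding adj_rel_def connected_graph_def simple_graph_def by (auto simp: doubleton_eq_iff)
  with WF(1) \<open>W = S\<close> assms(5) show False by blast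
qed

definition hub_star_E :: "nat \<Rightarrow> nat set \<Rightarrow> nat set set" where
  "hub_star_E n H = {{i, j} | i j. i < j \<and> j < n \<and> (i = 0 \<or> j \<in> H)}"

lemma doubleton_mem_hub_star_E:
  assumes "i < j"
  shows "{i, j} \<in> hub_star_E n H \<longleftrightarrow> j < n \<and> (i = 0 \<or> j \<in> H)"
    and "{j, i} \<in> hub_star_E n H \<longleftrightarrow> j < n \<and> (i = 0 \<or> j \<in> H)"
  using assms unfolding hub_star_E_def by (auto simp: doubleton_eq_iff)

lemma singleton_notin_hub_star_E: "{i} \<notin> hub_star_E n H"
  unfolding hub_star_E_def by (auto simp: doubleton_eq_iff)

lemma star_E_eq_hub_star_E: "star_E n = hub_star_E n {}"
  unfolding star_E_def hub_star_E_def by fastforce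

lemma connected_graph_hub_star:
  assumes "1 \<le> n"
  shows "connected_graph {0..<n} (hub_star_E n H)"
proof -
  have star: "connected_graph {0..<n} (star_edges 0 {0..<n})"
    using assms by (intro connected_graph_star_edges) auto
  have "star_edges 0 {0..<n} \<subseteq> hub_star_E n H"
  proof
    fix e assume "e \<in> star_edges 0 {0..<n}"
    then obtain s where "s \<in> {0..<n} - {0}" "e = {0, s}" unfolding star_edges_def by blast
    then show "e \<in> hub_star_E n H" by (simp add: doubleton_mem_hub_star_E)
  qed
  moreover have "simple_graph {0..<n} (hub_star_E n H)"
  proof -
    have "\<exists>u v. u \<noteq> v \<and> u \<in> {0..<n} \<and> v \<in> {0..<n} \<and> e = {u, v}"
      if e: "e \<in> hub_star_E n H" for e
    proof -
      obtain i j where "i < j" "j < n" "e = {i, j}" using e unfolding hub_star_E_def by blast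
      then show ?thesis by (intro exI[of _ i] exI[of _ j]) simp
    qed
    then show ?thesis by (simp add: simple_graph_def)
  qed
  ultimately show ?thesis by (rule connected_graph_mono_edges[OF star])
qed

lemma steiner_dist_hub_star:
  assumes S: "S \<subseteq> {0..<n}" "2 \<le> card S"
  shows "steiner_dist {0..<n} (hub_star_E n H) S = (if 0 \<in> S \<or> Max S \<in> H then card S - 1 else card S)"
proof -
  have fS: "finite S" and "S \<noteq> {}" using S rev_finite_subset[of "{0..<n}" S] by auto
  then have max: "Max S \<in> S" "\<And>s. s \<in> S \<Longrightarrow> s \<le> Max S" by auto
  then have "1 \<le> n" using S(1) by auto
  note conn = connected_graph_hub_star[OF this, of H]
  show ?thesis
  proof (cases "0 \<in> S")
    case True
    then show ?thesis using S max
      by (subst steiner_dist_dominated[OF conn True]) (auto simp: doubleton_mem_hub_star_E)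
  next
    case no_zero: False
    show ?thesis
    proof (cases "Max S \<in> H")
      case True
      have "{Max S, s} \<in> hub_star_E n H" if "s \<in> S - {Max S}" for s
      proof -
        have "s < Max S" "Max S < n" using that max S(1) by fastforce+
        with True show ?thesis by (simp add: doubleton_mem_hub_star_E)
      qed
      then have "steiner_dist {0..<n} (hub_star_E n H) S = card S - 1"
        by (intro steiner_dist_dominated[OF conn max(1) S(1)]) blast
      with True show ?thesis by simp
    next
      case False
      have "{Max S, s} \<notin> hub_star_E n H" if "s \<in> S" for s
      proof (cases "s = Max S")
        case True
        then show ?thesis using singleton_notin_hub_star_E by simp
      next
        case s_below: False
        then have "s < Max S" using max(2)[OF that] by linarith
        moreover have "s \<noteq> 0" using that no_zero by metis
        ultimately show ?thesis using False by (simp add: doubleton_mem_hub_star_E)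
      qed
      then have "card S \<le> steiner_dist {0..<n} (hub_star_E n H) S"
        using steiner_dist_ge_isolated[OF conn S max(1)] by blast
      moreover have "steiner_dist {0..<n} (hub_star_E n H) S \<le> card (insert 0 S) - 1"
        using S(1) \<open>1 \<le> n\<close>
        by (intro steiner_dist_le_common_neighbour) (auto simp: doubleton_mem_hub_star_E)
      ultimately show ?thesis using no_zero False fS by simp
    qed
  qed
qed

lemma SW_hub_star:
  assumes "2 \<le> k"
  shows "SW k {0..<n} (hub_star_E n H) + card {S. S \<subseteq> {0..<n} \<and> card S = k \<and> (0 \<in> S \<or> Max S \<in> H)}
    = k * (n choose k)"
proof -
  define K where "K = {S. S \<subseteq> {0..<n} \<and> card S = k}"
  define dominated where "dominated S \<longleftrightarrow> 0 \<in> S \<or> Max S \<in> H" for S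
  have "finite K" unfolding K_def by simp
  have "SW k {0..<n} (hub_star_E n H) = (\<Sum>S\<in>K. if dominated S then k - 1 else k)"
    unfolding SW_def K_def dominated_def using assms by (intro sum.cong) (auto simp: steiner_dist_hub_star)
  moreover have "card {S \<in> K. dominated S} = (\<Sum>S\<in>K. if dominated S then 1 else 0)"
    unfolding card_eq_sum using \<open>finite K\<close> by (rule sum.inter_filter)
  moreover have "(\<Sum>S\<in>K. (if dominated S then k - 1 else k) + (if dominated S then 1 else 0)) = (\<Sum>S\<in>K. k)"
    using assms by (intro sum.cong) auto
  moreover have "card K = n choose k" unfolding K_def using n_subsets[of "{0..<n}" k] by simp
  moreover have "{S. S \<subseteq> {0..<n} \<and> card S = k \<and> (0 \<in> S \<or> Max S \<in> H)} = {S \<in> K. dominated S}"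
    unfolding K_def dominated_def by blast
  ultimately show ?thesis by (simp add: sum.distrib mult.commute)
qed

lemma card_subsets_containing:
  assumes "finite T" "x \<notin> T"
  shows "card {S. S \<subseteq> insert x T \<and> card S = Suc j \<and> x \<in> S} = card T choose j"
proof -
  have "{S. S \<subseteq> insert x T \<and> card S = Suc j \<and> x \<in> S} = insert x ` {S. S \<subseteq> T \<and> card S = j}"
  proof (rule set_eqI, rule iffI)
    fix S assume S: "S \<in> {S. S \<subseteq> insert x T \<and> card S = Suc j \<and> x \<in> S}"
    then have "S - {x} \<subseteq> T" "card (S - {x}) = j" by (auto simp: card_Diff_singleton)
    then have "S - {x} \<in> {S. S \<subseteq> T \<and> card S = j}" by blast
    moreover have "S = insert x (S - {x})" using S by auto
    ultimately show "S \<in> insert x ` {S. S \<subseteq> T \<and> card S = j}" by blast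
  next
    fix S assume "S \<in> insert x ` {S. S \<subseteq> T \<and> card S = j}"
    then obtain S' where "S' \<subseteq> T" "card S' = j" "S = insert x S'" by blast
    moreover from this have "finite S'" "x \<notin> S'" using assms finite_subset by blast+
    ultimately show "S \<in> {S. S \<subseteq> insert x T \<and> card S = Suc j \<and> x \<in> S}" by auto
  qed
  moreover have "inj_on (insert x) {S. S \<subseteq> T \<and> card S = j}"
    using assms(2) by (auto simp: inj_on_def insert_ident)
  ultimately show ?thesis using n_subsets[OF assms(1)] by (simp add: card_image)
qed

lemma card_subsets_Max_eq:
  assumes "1 \<le> k" "0 < h" "h < n"
  shows "card {S. S \<subseteq> {0..<n} \<and> card S = k \<and> 0 \<notin> S \<and> Max S = h} = (h - 1) choose (k - 1)"
proof -
  have "{S. S \<subseteq> {0..<n} \<and> card S = k \<and> 0 \<notin> S \<and> Max S = h}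
      = {S. S \<subseteq> insert h {1..<h} \<and> card S = Suc (k - 1) \<and> h \<in> S}"
  proof (rule set_eqI, rule iffI)
    fix S assume S: "S \<in> {S. S \<subseteq> {0..<n} \<and> card S = k \<and> 0 \<notin> S \<and> Max S = h}"
    then have "finite S" "S \<noteq> {}" using assms(1) rev_finite_subset[of "{0..<n}" S] by auto
    then have "h \<in> S" "\<forall>s\<in>S. 0 < s \<and> s \<le> h"
      using S Max_in[of S] Max_ge[of S] by (auto intro: gr0I)
    with S assms(1) show "S \<in> {S. S \<subseteq> insert h {1..<h} \<and> card S = Suc (k - 1) \<and> h \<in> S}"
      by fastforce
  next
    fix S assume S: "S \<in> {S. S \<subseteq> insert h {1..<h} \<and> card S = Suc (k - 1) \<and> h \<in> S}"
    then have "finite S" using rev_finite_subset[of "insert h {1..<h}" S] by auto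
    with S have "Max S = h" by (intro Max_eqI) auto
    with S assms show "S \<in> {S. S \<subseteq> {0..<n} \<and> card S = k \<and> 0 \<notin> S \<and> Max S = h}"
      by auto
  qed
  then show ?thesis using card_subsets_containing[of "{1..<h}" h "k - 1"] by simp
qed

lemma card_subsets_zero_or_Max_in:
  assumes "1 \<le> k" "finite H" "H \<subseteq> {1..<n}"
  shows "card {S. S \<subseteq> {0..<n} \<and> card S = k \<and> (0 \<in> S \<or> Max S \<in> H)}
    = card {S. S \<subseteq> {0..<n} \<and> card S = k \<and> 0 \<in> S} + (\<Sum>h\<in>H. (h - 1) choose (k - 1))"
proof -
  define B where "B h = {S. S \<subseteq> {0..<n} \<and> card S = k \<and> 0 \<notin> S \<and> Max S = h}" for h
  have "{S. S \<subseteq> {0..<n} \<and> card S = k \<and> (0 \<in> S \<or> Max S \<in> H)}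
      = {S. S \<subseteq> {0..<n} \<and> card S = k \<and> 0 \<in> S} \<union> (\<Union>h\<in>H. B h)"
    by (auto simp: B_def)
  then have "card {S. S \<subseteq> {0..<n} \<and> card S = k \<and> (0 \<in> S \<or> Max S \<in> H)}
      = card {S. S \<subseteq> {0..<n} \<and> card S = k \<and> 0 \<in> S} + card (\<Union>h\<in>H. B h)"
    using assms(2) by (simp only:) (intro card_Un_disjoint; auto simp: B_def)
  also have "card (\<Union>h\<in>H. B h) = (\<Sum>h\<in>H. card (B h))"
    using assms(2) by (intro card_UN_disjoint) (auto simp: B_def)
  also have "\<dots> = (\<Sum>h\<in>H. (h - 1) choose (k - 1))"
    using assms by (intro sum.cong) (auto simp: B_def card_subsets_Max_eq)
  finally show ?thesis .
qed

theorem proposition1p2: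
  fixes k n :: nat and A :: "nat set"
  assumes "k \<ge> 2" and "n \<ge> 1" and "finite A"
    and "\<forall>a\<in>A. 0 < a \<and> a < n - 1"
  shows "\<exists>(V::nat set) E. connected_graph V E \<and>
           int (SW k V E) = int (SW k (star_V n) (star_E n)) - (\<Sum>a\<in>A. int (a choose (k - 1)))"
proof -
  define H where "H = Suc ` A"
  define with_center where "with_center = card {S. S \<subseteq> {0..<n} \<and> card S = k \<and> 0 \<in> S}"
  have "(\<Sum>h\<in>H. (h - 1) choose (k - 1)) = (\<Sum>a\<in>A. a choose (k - 1))"
    unfolding H_def by (simp add: sum.reindex)
  moreover have "finite H" "H \<subseteq> {1..<n}" using assms(3,4) by (auto simp: H_def)
  ultimately have "SW k {0..<n} (hub_star_E n H) + with_center + (\<Sum>a\<in>A. a choose (k - 1)) = k * (n choose k)"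
    using SW_hub_star[OF assms(1), of n H] card_subsets_zero_or_Max_in[of k H n] assms(1)
    by (simp add: with_center_def)
  moreover have "SW k (star_V n) (star_E n) + with_center = k * (n choose k)"
    using SW_hub_star[OF assms(1), of n "{}"] by (simp add: star_V_def star_E_eq_hub_star_E with_center_def)
  ultimately have "SW k {0..<n} (hub_star_E n H) + (\<Sum>a\<in>A. a choose (k - 1)) = SW k (star_V n) (star_E n)"
    by linarith
  then have "int (SW k {0..<n} (hub_star_E n H)) = int (SW k (star_V n) (star_E n)) - (\<Sum>a\<in>A. int (a choose (k - 1)))"
    by (simp flip: of_nat_add of_nat_sum)
  with connected_graph_hub_star[OF assms(2)] show ?thesis by blast
qed

end
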